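(* Let $k\le l$ be positive integers with $\gcd(k,l)=1$, let $n\ge1$ and $m\ge 0$ be integers, and write $m=qn+r$ with integers $q\ge 0$, $0\le r<n$. If $\frac{n}{q+2}\le r\le \frac{nk}{k+l}$, then $L^{k,l}(m,n)=nkq+r(k+l)$. If $r\ge \frac{nk}{k+l}$, then $L^{k,l}(m,n)=nk(q+1)$.
   Context: $\mathcal D^{k,l}(m,n)$ denotes the set of all $nk\times nl$ matrices with nonnegative integer entries all of whose row sums equal $ml$ and all of whose column sums equal $mk$. For an $s\times t$ matrix $A=(a_{ij})$ with $s\le t$, a transversal of $A$ is a set of entries $T=\{a_{1i_1},\dots,a_{si_s}\}$ with $i_1,\dots,i_s\in\{1,\dots,t\}$ pairwise distinct, and $|T|=a_{1i_1}+\cdots+a_{si_s}$; if $s>t$, the transversals of $A$ are those of its transpose. The tropical determinant is ${\rm tdet}(A)=\max_T|T|$, and $L^{k,l}(m,n)=\min_{A\in\mathcal D^{k,l}(m,n)}{\rm tdet}(A)$. *)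

theory Defs
  imports Complex_Main
begin

(* An s x t matrix with nonnegative integer entries is represented by
   A :: nat => nat => nat, rows indexed by {0..<s}, columns by {0..<t};
   entries outside this range are required to be 0 (canonical representative). *)

definition DKL :: "nat \<Rightarrow> nat \<Rightarrow> nat \<Rightarrow> nat \<Rightarrow> (nat \<Rightarrow> nat \<Rightarrow> nat) set" where
  "DKL k l m n = {A. (\<forall>i j. (i \<ge> n*k \<or> j \<ge> n*l) \<longrightarrow> A i j = 0)
      \<and> (\<forall>i<n*k. (\<Sum>j<n*l. A i j) = m*l)
      \<and> (\<forall>j<n*l. (\<Sum>i<n*k. A i j) = m*k)}"

definition transversal_weights :: "nat \<Rightarrow> nat \<Rightarrow> (nat \<Rightarrow> nat \<Rightarrow> nat) \<Rightarrow> nat set" where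
  "transversal_weights s t A =
     (if s \<le> t then {(\<Sum>i<s. A i (\<sigma> i)) | \<sigma>. inj_on \<sigma> {..<s} \<and> \<sigma> ` {..<s} \<subseteq> {..<t}}
      else {(\<Sum>j<t. A (\<sigma> j) j) | \<sigma>. inj_on \<sigma> {..<t} \<and> \<sigma> ` {..<t} \<subseteq> {..<s}})"

definition tdet :: "nat \<Rightarrow> nat \<Rightarrow> (nat \<Rightarrow> nat \<Rightarrow> nat) \<Rightarrow> nat" where
  "tdet s t A = Max (transversal_weights s t A)"

definition LKL :: "nat \<Rightarrow> nat \<Rightarrow> nat \<Rightarrow> nat \<Rightarrow> nat" where
  "LKL k l m n = Min (tdet (n*k) (n*l) ` DKL k l m n)"

end

theory Submission
  imports Defs
begin

text \<open>
  Lower bound: pad \<open>A \<in> DKL k l m n\<close> with zero rows to a square \<open>nl \<times> nl\<close> matrix. By Egervary's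
  theorem, a consequence of Hall's marriage theorem, a heaviest transversal of a square matrix weighs
  as much as a cheapest cover, i.e. integer potentials with \<open>A i j \<le> u i + v j\<close>. Comparing the cost
  of a cover with the least potential of a genuine row and the least column potential gives
  \<open>tdet A \<ge> min (nk(q + 1)) (nkq + r(k + l))\<close>.

  Upper bound: blowing an \<open>n \<times> n\<close> pattern with all line sums \<open>m\<close> up into constant \<open>k \<times> l\<close> blocks
  gives a matrix in \<open>DKL k l m n\<close>, and a cover \<open>U, V\<close> of the pattern bounds its tropical
  determinant by \<open>k \<Sum>U + l \<Sum>V\<close>. A circulant pattern with entries \<open>q\<close> and \<open>q + 1\<close> yields
  \<open>nk(q + 1)\<close>; when \<open>n \<le> r(q + 2)\<close>, an \<open>r \<times> r\<close> circulant corner bordered by entries \<open>q\<close> and \<open>q + 1\<close>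
  yields \<open>nkq + r(k + l)\<close>.
\<close>

definition hall_condition :: "'a set \<Rightarrow> ('a \<Rightarrow> 'b set) \<Rightarrow> bool" where
  "hall_condition I S \<longleftrightarrow> (\<forall>J\<subseteq>I. card J \<le> card (\<Union>(S ` J)))"

lemma hall_condition_subset: "hall_condition I S \<Longrightarrow> J \<subseteq> I \<Longrightarrow> hall_condition J S"
  unfolding hall_condition_def by blast

lemma hall_condition_card_ge_1:
  assumes "hall_condition I S" "i \<in> I"
  shows "1 \<le> card (S i)"
proof -
  have "card {i} \<le> card (\<Union>(S ` {i}))" using assms unfolding hall_condition_def by blast
  then show ?thesis by simp
qed

lemma hall_condition_finite: "hall_condition I S \<Longrightarrow> i \<in> I \<Longrightarrow> finite (S i)"
  using hall_condition_card_ge_1[of I S i] by (intro card_ge_0_finite) simp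

lemma hall_condition_nonempty: "hall_condition I S \<Longrightarrow> i \<in> I \<Longrightarrow> S i \<noteq> {}"
  using hall_condition_card_ge_1[of I S i] by auto

lemma hall_condition_Diff_tight:
  assumes "finite I" and hall: "hall_condition I S"
    and J: "J \<subseteq> I" "card (\<Union>(S ` J)) = card J"
  shows "hall_condition (I - J) (\<lambda>i. S i - \<Union>(S ` J))"
  unfolding hall_condition_def
proof (intro allI impI)
  fix K assume K: "K \<subseteq> I - J"
  have "finite (\<Union>(S ` J))"
    using J(1) \<open>finite I\<close> hall_condition_finite[OF hall] by (auto intro: finite_subset)
  then have "card (\<Union>(S ` (K \<union> J))) - card (\<Union>(S ` J)) \<le> card (\<Union>(S ` (K \<union> J)) - \<Union>(S ` J))"
    by (rule diff_card_le_card_Diff)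
  also have "\<Union>(S ` (K \<union> J)) - \<Union>(S ` J) = \<Union>((\<lambda>i. S i - \<Union>(S ` J)) ` K)" by auto
  finally have "card (\<Union>(S ` (K \<union> J))) - card J \<le> card (\<Union>((\<lambda>i. S i - \<Union>(S ` J)) ` K))"
    using J(2) by simp
  moreover have "card K + card J = card (K \<union> J)"
    using K J(1) \<open>finite I\<close> by (intro card_Un_disjoint[symmetric]) (auto intro: finite_subset)
  moreover have "card (K \<union> J) \<le> card (\<Union>(S ` (K \<union> J)))"
    using hall K J(1) unfolding hall_condition_def by (meson Diff_subset Un_least order_trans)
  ultimately show "card K \<le> card (\<Union>((\<lambda>i. S i - \<Union>(S ` J)) ` K))" by linarith
qed

lemma hall_condition_Diff_singleton:
  assumes hall: "hall_condition I S" and "i \<in> I"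
    and no_tight: "\<And>J. J \<noteq> {} \<Longrightarrow> J \<subset> I \<Longrightarrow> card (\<Union>(S ` J)) \<noteq> card J"
  shows "hall_condition (I - {i}) (\<lambda>j. S j - {x})"
  unfolding hall_condition_def
proof (intro allI impI)
  fix K assume K: "K \<subseteq> I - {i}"
  show "card K \<le> card (\<Union>((\<lambda>j. S j - {x}) ` K))"
  proof (cases "K = {}")
    case False
    have "K \<subset> I" using K \<open>i \<in> I\<close> by blast
    then have "card K < card (\<Union>(S ` K))"
      using hall no_tight[OF False] unfolding hall_condition_def by (simp add: order_less_le)
    have "card (\<Union>(S ` K)) - 1 \<le> card (\<Union>(S ` K) - {x})"
      using diff_card_le_card_Diff[of "{x}" "\<Union>(S ` K)"] by simp
    also have "\<Union>(S ` K) - {x} = \<Union>((\<lambda>j. S j - {x}) ` K)" by auto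
    finally show ?thesis using \<open>card K < card (\<Union>(S ` K))\<close> by linarith
  qed simp
qed

lemma inj_on_glue:
  assumes f: "inj_on f J" "\<forall>i\<in>J. f i \<in> S i"
    and g: "inj_on g (I - J)" "\<forall>i\<in>I - J. g i \<in> S i - \<Union>(S ` J)"
  shows "inj_on (\<lambda>i. if i \<in> J then f i else g i) I"
proof (rule inj_onI)
  fix a b assume ab: "a \<in> I" "b \<in> I" and eq: "(if a \<in> J then f a else g a) = (if b \<in> J then f b else g b)"
  have sep: "f d \<noteq> g c" if "c \<in> I - J" "d \<in> J" for c d
  proof -
    have "f d \<in> \<Union>(S ` J)" using f(2) that(2) by auto
    moreover have "g c \<notin> \<Union>(S ` J)" using g(2) that(1) by auto
    ultimately show ?thesis by auto
  qed
  show "a = b"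
  proof (cases "a \<in> J"; cases "b \<in> J")
    assume "a \<in> J" "b \<in> J" then show ?thesis using eq f(1) by (simp add: inj_on_eq_iff)
  next
    assume "a \<in> J" "b \<notin> J" then show ?thesis using eq sep[of b a] ab(2) by simp
  next
    assume "a \<notin> J" "b \<in> J" then show ?thesis using eq sep[of a b] ab(1) by simp
  next
    assume "a \<notin> J" "b \<notin> J" then show ?thesis using eq ab g(1) by (simp add: inj_on_eq_iff)
  qed
qed

text \<open>Halmos--Vaughan induction: a tight nonempty proper subfamily is matched separately from the
  rest; if there is none, any representative of one set may be fixed, as removing it from the other
  sets keeps Hall's condition.\<close>

theorem hall_marriage:
  assumes "finite I" "hall_condition I S"
  shows "\<exists>f. inj_on f I \<and> (\<forall>i\<in>I. f i \<in> S i)"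
  using assms
proof (induction "card I" arbitrary: I S rule: less_induct)
  case less
  have IH: "\<exists>f. inj_on f J \<and> (\<forall>i\<in>J. f i \<in> T i)" if "J \<subset> I" "hall_condition J T" for J and T :: "'a \<Rightarrow> 'b set"
    using less.hyps[OF psubset_card_mono[OF less.prems(1) that(1)]
        rev_finite_subset[OF less.prems(1) psubset_imp_subset[OF that(1)]] that(2)] .
  consider "I = {}" | J where "J \<noteq> {}" "J \<subset> I" "card (\<Union>(S ` J)) = card J"
    | i where "i \<in> I" "\<And>J. J \<noteq> {} \<Longrightarrow> J \<subset> I \<Longrightarrow> card (\<Union>(S ` J)) \<noteq> card J"
    by blast
  then show ?case
  proof cases
    case 1
    then show ?thesis by simp
  next
    case (2 J)
    obtain f where f: "inj_on f J" "\<forall>i\<in>J. f i \<in> S i"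
      using IH[OF 2(2) hall_condition_subset[OF less.prems(2)]] 2(2) by blast
    have "I - J \<subset> I" using 2(1,2) by blast
    then obtain g where g: "inj_on g (I - J)" "\<forall>i\<in>I - J. g i \<in> S i - \<Union>(S ` J)"
      using IH hall_condition_Diff_tight[OF less.prems 2(2)[THEN psubset_imp_subset] 2(3)] by blast
    have "inj_on (\<lambda>i. if i \<in> J then f i else g i) I"
      using f g by (rule inj_on_glue)
    then show ?thesis using f g by (intro exI[of _ "\<lambda>i. if i \<in> J then f i else g i"]) auto
  next
    case (3 i)
    obtain x where x: "x \<in> S i" using hall_condition_nonempty[OF less.prems(2) 3(1)] by blast
    have "hall_condition (I - {i}) (\<lambda>j. S j - {x})"
      using hall_condition_Diff_singleton[OF less.prems(2) 3] .
    moreover have "I - {i} \<subset> I" using 3(1) by blast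
    ultimately obtain g where g: "inj_on g (I - {i})" "\<forall>j\<in>I - {i}. g j \<in> S j - {x}"
      using IH by blast
    have "inj_on (g(i := x)) (insert i (I - {i}))"
      unfolding inj_on_insert using g by (auto simp: inj_on_def)
    then have "inj_on (g(i := x)) I" using 3(1) by (simp add: insert_absorb)
    then show ?thesis using g x by (intro exI[of _ "g(i := x)"]) auto
  qed
qed

definition weighted_cover :: "nat \<Rightarrow> (nat \<Rightarrow> nat \<Rightarrow> nat) \<Rightarrow> (nat \<Rightarrow> int) \<Rightarrow> (nat \<Rightarrow> int) \<Rightarrow> bool" where
  "weighted_cover N w u v \<longleftrightarrow> (\<forall>i<N. \<forall>j<N. int (w i j) \<le> u i + v j)"

lemma sum_reindex_perm_lessThan:
  fixes N :: nat
  assumes "inj_on \<sigma> {..<N}" "\<sigma> ` {..<N} \<subseteq> {..<N}"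
  shows "(\<Sum>i<N. g (\<sigma> i)) = (\<Sum>j<N. g j)"
  using sum.reindex[OF assms(1), of g] endo_inj_surj[OF finite_lessThan assms(2,1)] by simp

lemma weighted_cover_ge_assignment:
  assumes "weighted_cover N w u v" "inj_on \<sigma> {..<N}" "\<sigma> ` {..<N} \<subseteq> {..<N}"
  shows "(\<Sum>i<N. int (w i (\<sigma> i))) \<le> sum u {..<N} + sum v {..<N}"
proof -
  have "(\<Sum>i<N. int (w i (\<sigma> i))) \<le> (\<Sum>i<N. u i + v (\<sigma> i))"
    using assms unfolding weighted_cover_def by (intro sum_mono) auto
  also have "\<dots> = sum u {..<N} + sum v {..<N}"
    by (simp add: sum.distrib sum_reindex_perm_lessThan[OF assms(2,3)])
  finally show ?thesis .
qed

text \<open>Cover costs are integers bounded below by the weight of the identity assignment.\<close>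

lemma min_weighted_cover_exists:
  "\<exists>u v. weighted_cover N w u v \<and> (\<forall>u' v'. weighted_cover N w u' v' \<longrightarrow>
      sum u {..<N} + sum v {..<N} \<le> sum u' {..<N} + sum v' {..<N})"
proof -
  define cost where "cost uv = sum (fst uv) {..<N} + sum (snd uv) {..<N}"
    for uv :: "(nat \<Rightarrow> int) \<times> (nat \<Rightarrow> int)"
  define base where "base = (\<Sum>i<N. int (w i i))"
  have base_le: "base \<le> cost uv" if "weighted_cover N w (fst uv) (snd uv)" for uv
    using weighted_cover_ge_assignment[OF that, of id] unfolding base_def cost_def by simp
  have "weighted_cover N w (fst (\<lambda>i. int (\<Sum>j<N. w i j), \<lambda>_. 0)) (snd (\<lambda>i. int (\<Sum>j<N. w i j), \<lambda>_. 0))"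
    unfolding weighted_cover_def by (auto intro!: member_le_sum)
  from ex_has_least_nat[where P = "\<lambda>uv. weighted_cover N w (fst uv) (snd uv)" and m = "\<lambda>uv. nat (cost uv - base)", OF this]
  obtain uv where uv: "weighted_cover N w (fst uv) (snd uv)"
    and least: "\<And>uv'. weighted_cover N w (fst uv') (snd uv') \<Longrightarrow> nat (cost uv - base) \<le> nat (cost uv' - base)"
    by blast
  have "cost uv \<le> cost (u', v')" if "weighted_cover N w u' v'" for u' v'
    using least[of "(u', v')"] base_le[OF uv] base_le[of "(u', v')"] that by simp
  then show ?thesis using uv unfolding cost_def by (intro exI[of _ "fst uv"] exI[of _ "snd uv"]) auto
qed

text \<open>If the tight entries violated Hall's condition on some set \<open>X\<close> of rows, lowering the row
  potentials on \<open>X\<close> and raising the column potentials on the tight neighbourhood of \<open>X\<close> by one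
  would give a cheaper cover.\<close>

lemma min_weighted_cover_hall:
  assumes cover: "weighted_cover N w u v"
    and min: "\<And>u' v'. weighted_cover N w u' v' \<Longrightarrow> sum u {..<N} + sum v {..<N} \<le> sum u' {..<N} + sum v' {..<N}"
  shows "hall_condition {..<N} (\<lambda>i. {j. j < N \<and> int (w i j) = u i + v j})"
  unfolding hall_condition_def
proof (intro allI impI, rule ccontr)
  fix X assume X: "X \<subseteq> {..<N}"
  define Y where "Y = (\<Union>i\<in>X. {j. j < N \<and> int (w i j) = u i + v j})"
  assume "\<not> card X \<le> card Y"
  define u' where "u' i = u i - of_bool (i \<in> X)" for i
  define v' where "v' j = v j + of_bool (j \<in> Y)" for j
  have "weighted_cover N w u' v'"
    using cover unfolding weighted_cover_def u'_def v'_def Y_def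
    by (force simp: of_bool_def)
  moreover have "sum u' {..<N} = sum u {..<N} - int (card X)"
    using X by (simp add: u'_def sum_subtractf Int_absorb1)
  moreover have "Y \<subseteq> {..<N}" unfolding Y_def by auto
  then have "sum v' {..<N} = sum v {..<N} + int (card Y)"
    by (simp add: v'_def sum.distrib Int_absorb1)
  ultimately show False using min[of u' v'] \<open>\<not> card X \<le> card Y\<close> by linarith
qed

theorem egervary:
  "\<exists>u v \<sigma>. weighted_cover N w u v \<and> inj_on \<sigma> {..<N} \<and> \<sigma> ` {..<N} \<subseteq> {..<N}
      \<and> (\<Sum>i<N. int (w i (\<sigma> i))) = sum u {..<N} + sum v {..<N}"
proof -
  obtain u v where cover: "weighted_cover N w u v"
    and min: "\<And>u' v'. weighted_cover N w u' v' \<Longrightarrow> sum u {..<N} + sum v {..<N} \<le> sum u' {..<N} + sum v' {..<N}"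
    using min_weighted_cover_exists by blast
  obtain \<sigma> where \<sigma>: "inj_on \<sigma> {..<N}" "\<forall>i\<in>{..<N}. \<sigma> i < N \<and> int (w i (\<sigma> i)) = u i + v (\<sigma> i)"
    using hall_marriage[OF _ min_weighted_cover_hall[OF cover min]] by auto
  then have "\<sigma> ` {..<N} \<subseteq> {..<N}" by auto
  have "(\<Sum>i<N. int (w i (\<sigma> i))) = (\<Sum>i<N. u i + v (\<sigma> i))" using \<sigma>(2) by simp
  also have "\<dots> = sum u {..<N} + sum v {..<N}"
    by (simp add: sum.distrib sum_reindex_perm_lessThan[OF \<sigma>(1) \<open>\<sigma> ` {..<N} \<subseteq> {..<N}\<close>])
  finally show ?thesis using cover \<sigma>(1) \<open>\<sigma> ` {..<N} \<subseteq> {..<N}\<close> by blast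
qed

lemma transversal_weights_finite:
  assumes "s \<le> t"
  shows "finite (transversal_weights s t A)"
proof (rule finite_subset)
  show "transversal_weights s t A \<subseteq> {..(\<Sum>i<s. \<Sum>j<t. A i j)}"
    using assms by (auto simp: transversal_weights_def intro!: sum_mono member_le_sum)
qed simp

lemma transversal_weight_mem:
  assumes "s \<le> t" "inj_on \<sigma> {..<s}" "\<sigma> ` {..<s} \<subseteq> {..<t}"
  shows "(\<Sum>i<s. A i (\<sigma> i)) \<in> transversal_weights s t A"
  using assms unfolding transversal_weights_def by auto

lemma tdet_ge_transversal:
  assumes "s \<le> t" "inj_on \<sigma> {..<s}" "\<sigma> ` {..<s} \<subseteq> {..<t}"
  shows "(\<Sum>i<s. A i (\<sigma> i)) \<le> tdet s t A"
  unfolding tdet_def using transversal_weight_mem[OF assms] transversal_weights_finite[OF assms(1)]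
  by (rule Max_ge[rotated])

lemma tdet_le_cover:
  assumes "s \<le> t" "\<And>i j. i < s \<Longrightarrow> j < t \<Longrightarrow> A i j \<le> u i + v j"
  shows "tdet s t A \<le> sum u {..<s} + sum v {..<t}"
  unfolding tdet_def
proof (rule Max.boundedI)
  show "finite (transversal_weights s t A)" using assms(1) by (rule transversal_weights_finite)
  show "transversal_weights s t A \<noteq> {}" using transversal_weight_mem[OF assms(1), of id] assms(1) by auto
  fix x assume "x \<in> transversal_weights s t A"
  then obtain \<sigma> where \<sigma>: "x = (\<Sum>i<s. A i (\<sigma> i))" "inj_on \<sigma> {..<s}" "\<sigma> ` {..<s} \<subseteq> {..<t}"
    using assms(1) unfolding transversal_weights_def by auto
  have "x \<le> (\<Sum>i<s. u i + v (\<sigma> i))" unfolding \<sigma>(1) using assms(2) \<sigma>(3) by (intro sum_mono) auto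
  also have "\<dots> = sum u {..<s} + sum v (\<sigma> ` {..<s})" by (simp add: sum.distrib sum.reindex[OF \<sigma>(2)])
  also have "\<dots> \<le> sum u {..<s} + sum v {..<t}" using \<sigma>(3) by (simp add: sum_mono2)
  finally show "x \<le> sum u {..<s} + sum v {..<t}" .
qed

lemma DKL_weighted_cover_le_tdet:
  assumes "k \<le> l" and A: "A \<in> DKL k l m n"
  shows "\<exists>u v. weighted_cover (n*l) A u v \<and> sum u {..<n*l} + sum v {..<n*l} \<le> int (tdet (n*k) (n*l) A)"
proof -
  have sN: "n*k \<le> n*l" using assms(1) by simp
  obtain u v \<sigma> where cover: "weighted_cover (n*l) A u v" and \<sigma>: "inj_on \<sigma> {..<n*l}" "\<sigma> ` {..<n*l} \<subseteq> {..<n*l}"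
    and eq: "(\<Sum>i<n*l. int (A i (\<sigma> i))) = sum u {..<n*l} + sum v {..<n*l}"
    using egervary by blast
  have "(\<Sum>i<n*l. int (A i (\<sigma> i))) = (\<Sum>i<n*k. int (A i (\<sigma> i)))"
    using A sN unfolding DKL_def by (intro sum.mono_neutral_right) auto
  also have "\<dots> \<le> int (tdet (n*k) (n*l) A)"
  proof -
    have "inj_on \<sigma> {..<n*k}" using sN by (intro inj_on_subset[OF \<sigma>(1)]) auto
    moreover have "\<sigma> ` {..<n*k} \<subseteq> {..<n*l}"
      using \<sigma>(2) sN by (meson image_mono lessThan_subset_iff order_trans)
    ultimately show ?thesis using tdet_ge_transversal[OF sN, of \<sigma> A] by (simp flip: of_nat_sum)
  qed
  finally show ?thesis using cover eq by auto
qed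

lemma weighted_cover_row_sum_le:
  assumes "weighted_cover N w u v" "i < N"
  shows "(\<Sum>j<N. int (w i j)) \<le> int N * u i + sum v {..<N}"
proof -
  have "(\<Sum>j<N. int (w i j)) \<le> (\<Sum>j<N. u i + v j)"
    using assms unfolding weighted_cover_def by (intro sum_mono) auto
  then show ?thesis by (simp add: sum.distrib)
qed

lemma weighted_cover_col_sum_le:
  assumes "weighted_cover N w u v" "s \<le> N" "j < N"
  shows "(\<Sum>i<s. int (w i j)) \<le> sum u {..<s} + int s * v j"
proof -
  have "(\<Sum>i<s. int (w i j)) \<le> (\<Sum>i<s. u i + v j)"
    using assms unfolding weighted_cover_def by (intro sum_mono) auto
  then show ?thesis by (simp add: sum.distrib)
qed

text \<open>A zero row forces its potential to be at least \<open>- v j\<close>.\<close>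

lemma weighted_cover_zero_rows:
  assumes cover: "weighted_cover N w u v" and "s \<le> N" "j < N"
    and zero: "\<And>i. s \<le> i \<Longrightarrow> w i j = 0"
  shows "sum u {..<s} + sum v {..<N} - (int N - int s) * v j \<le> sum u {..<N} + sum v {..<N}"
proof -
  have "- v j \<le> u i" if "i \<in> {s..<N}" for i
    using cover zero[of i] that \<open>j < N\<close> unfolding weighted_cover_def by force
  then have "- (int (N - s) * v j) \<le> sum u {s..<N}"
    using sum_mono[of "{s..<N}" "\<lambda>_. - v j" u] by simp
  moreover have "sum u {..<N} = sum u {..<s} + sum u {s..<N}"
    using \<open>s \<le> N\<close> by (metis atLeast0LessThan sum.atLeastLessThan_concat zero_le)
  ultimately show ?thesis using \<open>s \<le> N\<close> by (simp add: of_nat_diff algebra_simps)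
qed

text \<open>With \<open>a\<close> the least potential of a genuine row and \<open>b\<close> the least column potential:
  if \<open>a + b > q\<close> the potentials cost at least \<open>n k (a + b)\<close>; otherwise the line sums through the
  minimising row and column give at least \<open>m (k + l) - n l (a + b)\<close>.\<close>

lemma DKL_weighted_cover_cost_ge:
  assumes "k \<le> l" "0 < n*k" and A: "A \<in> DKL k l m n" and cover: "weighted_cover (n*l) A u v"
  shows "int (min (n*k*(m div n + 1)) (n*k*(m div n) + (m mod n)*(k+l))) \<le> sum u {..<n*l} + sum v {..<n*l}"
proof -
  define s N q r where "s = n*k" and "N = n*l" and "q = m div n" and "r = m mod n"
  have sN: "s \<le> N" "0 < s" using assms(1,2) unfolding s_def N_def by auto
  obtain i0 where i0: "i0 < s" "\<And>i. i < s \<Longrightarrow> u i0 \<le> u i"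
    using ex_is_arg_min_if_finite[of "{..<s}" u] sN by (auto simp: is_arg_min_linorder)
  obtain j0 where j0: "j0 < N" "\<And>j. j < N \<Longrightarrow> v j0 \<le> v j"
    using ex_is_arg_min_if_finite[of "{..<N}" v] sN by (auto simp: is_arg_min_linorder)
  define a b where "a = u i0" and "b = v j0"
  have cost: "sum u {..<s} + sum v {..<N} - int N * b + int s * b \<le> sum u {..<N} + sum v {..<N}"
    using weighted_cover_zero_rows[OF cover[folded N_def] sN(1) j0(1)] A
    unfolding DKL_def s_def b_def by (simp add: algebra_simps)
  show ?thesis
  proof (cases "a + b \<ge> int q + 1")
    case True
    have "int s * a \<le> sum u {..<s}"
      using sum_mono[of "{..<s}" "\<lambda>_. a" u] i0 unfolding a_def by simp
    moreover have "int N * b \<le> sum v {..<N}"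
      using sum_mono[of "{..<N}" "\<lambda>_. b" v] j0 unfolding b_def by simp
    moreover have "int s * int q + int s \<le> int s * a + int s * b"
      using mult_left_mono[OF True, of "int s"] by (simp add: algebra_simps)
    ultimately have "int (s * (q + 1)) \<le> sum u {..<N} + sum v {..<N}" using cost by simp
    then show ?thesis unfolding s_def N_def q_def by linarith
  next
    case False
    have "int (m*l) \<le> int N * a + sum v {..<N}"
      using weighted_cover_row_sum_le[OF cover[folded N_def], of i0] A i0(1) sN(1)
      unfolding DKL_def s_def N_def a_def by (simp flip: of_nat_sum)
    moreover have "int (m*k) \<le> sum u {..<s} + int s * b"
      using weighted_cover_col_sum_le[OF cover[folded N_def] sN(1) j0(1)] A j0(1)
      unfolding DKL_def s_def N_def b_def by (simp flip: of_nat_sum)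
    moreover have "int N * a + int N * b \<le> int N * int q"
      using mult_left_mono[of "a + b" "int q" "int N"] False by (simp add: algebra_simps)
    moreover have "m = n*q + r" unfolding q_def r_def by simp
    then have "int (m*k) + int (m*l) = int N * int q + int (s*q + r*(k+l))"
      unfolding s_def N_def by (simp add: algebra_simps)
    ultimately have "int (s*q + r*(k+l)) \<le> sum u {..<N} + sum v {..<N}" using cost by linarith
    then show ?thesis unfolding s_def N_def q_def r_def by linarith
  qed
qed

lemma sum_lessThan_add: fixes a b :: nat shows "sum f {..<a + b} = sum f {..<a} + (\<Sum>i<b. f (a + i))"
  by (induction b) (auto simp: algebra_simps)

lemma sum_lessThan_mult_div:
  assumes "0 < l"
  shows "(\<Sum>j<n*l. f (j div l)) = l * (\<Sum>b<n. f b :: nat)"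
proof (induction n)
  case (Suc n)
  have "(\<Sum>j<Suc n * l. f (j div l)) = (\<Sum>j<n*l + l. f (j div l))"
    by (simp add: add.commute)
  also have "\<dots> = (\<Sum>j<n*l. f (j div l)) + (\<Sum>i<l. f ((n*l + i) div l))"
    by (rule sum_lessThan_add)
  also have "(\<Sum>i<l. f ((n*l + i) div l)) = l * f n"
    using assms by simp
  finally show ?case using Suc by (simp add: algebra_simps)
qed simp

definition blow_up :: "nat \<Rightarrow> nat \<Rightarrow> nat \<Rightarrow> (nat \<Rightarrow> nat \<Rightarrow> nat) \<Rightarrow> nat \<Rightarrow> nat \<Rightarrow> nat" where
  "blow_up n k l P i j = (if i < n*k \<and> j < n*l then P (i div k) (j div l) else 0)"

lemma blow_up_DKL:
  assumes "0 < k" "0 < l"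
    and rows: "\<And>a. a < n \<Longrightarrow> (\<Sum>b<n. P a b) = m"
    and cols: "\<And>b. b < n \<Longrightarrow> (\<Sum>a<n. P a b) = m"
  shows "blow_up n k l P \<in> DKL k l m n"
  unfolding DKL_def
proof (intro CollectI conjI allI impI)
  fix i j assume "n*k \<le> i \<or> n*l \<le> j"
  then show "blow_up n k l P i j = 0" unfolding blow_up_def by auto
next
  fix i assume i: "i < n*k"
  have "(\<Sum>j<n*l. blow_up n k l P i j) = (\<Sum>j<n*l. P (i div k) (j div l))"
    unfolding blow_up_def using i by simp
  also have "\<dots> = m * l"
    using sum_lessThan_mult_div[OF assms(2), of "P (i div k)" n] rows i by (simp add: less_mult_imp_div_less)
  finally show "(\<Sum>j<n*l. blow_up n k l P i j) = m * l" .
next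
  fix j assume j: "j < n*l"
  have "(\<Sum>i<n*k. blow_up n k l P i j) = (\<Sum>i<n*k. P (i div k) (j div l))"
    unfolding blow_up_def using j by simp
  also have "\<dots> = m * k"
    using sum_lessThan_mult_div[OF assms(1), of "\<lambda>a. P a (j div l)" n] cols j by (simp add: less_mult_imp_div_less)
  finally show "(\<Sum>i<n*k. blow_up n k l P i j) = m * k" .
qed

lemma tdet_blow_up_le:
  assumes "0 < k" "k \<le> l" and cover: "\<And>a b. a < n \<Longrightarrow> b < n \<Longrightarrow> P a b \<le> U a + V b"
  shows "tdet (n*k) (n*l) (blow_up n k l P) \<le> k * sum U {..<n} + l * sum V {..<n}"
proof -
  have "tdet (n*k) (n*l) (blow_up n k l P) \<le> (\<Sum>i<n*k. U (i div k)) + (\<Sum>j<n*l. V (j div l))"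
    using assms(2) cover by (intro tdet_le_cover) (auto simp: blow_up_def less_mult_imp_div_less)
  also have "\<dots> = k * sum U {..<n} + l * sum V {..<n}"
    using assms(1,2) by (simp add: sum_lessThan_mult_div)
  finally show ?thesis .
qed

definition circulant :: "nat \<Rightarrow> nat \<Rightarrow> nat \<Rightarrow> nat \<Rightarrow> nat" where
  "circulant N c x y = c div N + of_bool ((x + y) mod N < c mod N)"

lemma circulant_sym: "circulant N c x y = circulant N c y x"
  unfolding circulant_def by (simp add: add.commute)

lemma circulant_le: "circulant N c x y \<le> c div N + 1"
  unfolding circulant_def by simp

lemma inj_on_add_mod: "inj_on (\<lambda>y. (x + y) mod N) {..<N :: nat}"
proof (rule inj_onI)
  fix y z assume "y \<in> {..<N}" "z \<in> {..<N}" "(x + y) mod N = (x + z) mod N"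
  then have "int N dvd int y - int z"
    by (metis add_diff_cancel_left mod_eq_dvd_iff of_nat_add of_nat_mod)
  then show "y = z"
    using \<open>y \<in> {..<N}\<close> \<open>z \<in> {..<N}\<close> by (metis lessThan_iff mod_eq_dvd_iff mod_less nat_int zmod_int)
qed

lemma circulant_row_sum:
  assumes "0 < N"
  shows "(\<Sum>y<N. circulant N c x y) = c"
proof -
  define h where "h z = (of_bool (z < c mod N) :: nat)" for z
  have inj: "inj_on (\<lambda>y. (x + y) mod N) {..<N}" by (rule inj_on_add_mod)
  then have "(\<lambda>y. (x + y) mod N) ` {..<N} = {..<N}"
    using assms by (intro endo_inj_surj) auto
  then have "(\<Sum>y<N. h ((x + y) mod N)) = (\<Sum>z<N. h z)"
    using sum.reindex[OF inj, of h] by simp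
  also have "\<dots> = c mod N"
    using assms by (simp add: h_def Int_absorb1 lessThan_def[symmetric])
  finally show ?thesis by (simp add: circulant_def sum.distrib h_def)
qed

lemma circulant_col_sum: "0 < N \<Longrightarrow> (\<Sum>x<N. circulant N c x y) = c"
  using circulant_row_sum[of N c y] by (simp add: circulant_sym)

lemma DKL_tdet_le_uniform:
  assumes "0 < k" "k \<le> l" "0 < n"
  shows "\<exists>A\<in>DKL k l m n. tdet (n*k) (n*l) A \<le> n*k*(m div n + 1)"
proof
  show "blow_up n k l (circulant n m) \<in> DKL k l m n"
    using assms by (intro blow_up_DKL) (simp_all add: circulant_row_sum circulant_col_sum)
  have "tdet (n*k) (n*l) (blow_up n k l (circulant n m)) \<le> k * (\<Sum>_<n. m div n + 1) + l * (\<Sum>_<n. 0)"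
    using assms(1,2) circulant_le by (intro tdet_blow_up_le) auto
  then show "tdet (n*k) (n*l) (blow_up n k l (circulant n m)) \<le> n*k*(m div n + 1)"
    by (simp add: algebra_simps)
qed

definition bordered_circulant :: "nat \<Rightarrow> nat \<Rightarrow> nat \<Rightarrow> nat \<Rightarrow> nat \<Rightarrow> nat \<Rightarrow> nat" where
  "bordered_circulant s r q c a b =
     (if a < s \<and> b < s then q else if a < s \<or> b < s then q + 1 else circulant r c (a - s) (b - s))"

lemma bordered_circulant_sym: "bordered_circulant s r q c a b = bordered_circulant s r q c b a"
  unfolding bordered_circulant_def by (auto simp: circulant_sym)

lemma bordered_circulant_row_sum:
  assumes "0 < r" "a < s + r"
  shows "(\<Sum>b<s+r. bordered_circulant s r q c a b) = (if a < s then s*q + r*(q+1) else s*(q+1) + c)"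
proof -
  have "(\<Sum>b<s+r. bordered_circulant s r q c a b)
      = (\<Sum>b<s. bordered_circulant s r q c a b) + (\<Sum>i<r. bordered_circulant s r q c a (s + i))"
    by (rule sum_lessThan_add)
  then show ?thesis
    using assms circulant_row_sum[of r c "a - s"] by (simp add: bordered_circulant_def)
qed

lemma bordered_circulant_le:
  assumes "c div r < q + 1"
  shows "bordered_circulant s r q c a b \<le> (if a < s then q else q + 1) + (if b < s then 0 else 1)"
  using circulant_le[of r c "a - s" "b - s"] assms by (simp add: bordered_circulant_def)

lemma DKL_tdet_le_bordered:
  assumes "0 < k" "k \<le> l" "0 < n" and small: "n \<le> (m mod n) * (m div n + 2)"
  shows "\<exists>A\<in>DKL k l m n. tdet (n*k) (n*l) A \<le> n*k*(m div n) + (m mod n)*(k+l)"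
proof
  define q r where "q = m div n" and "r = m mod n"
  define s c where "s = n - r" and "c = r*(q+2) - n"
  define P where "P = bordered_circulant s r q c"
  have "r < n" "n \<le> r*(q+2)" using assms(3) small unfolding q_def r_def by auto
  then have "0 < r" "s + r = n" "c + n = r*(q+2)" unfolding s_def c_def by (auto intro: gr0I)
  have "m = n*q + r" unfolding q_def r_def by simp
  then have line_sum: "(\<Sum>b<n. P a b) = m" if "a < n" for a
    using bordered_circulant_row_sum[OF \<open>0 < r\<close>, of a s q c] that \<open>s + r = n\<close> \<open>c + n = r*(q+2)\<close>
    unfolding P_def by (auto simp: algebra_simps)
  moreover have "(\<Sum>a<n. P a b) = m" if "b < n" for b
    using line_sum[OF that] by (simp add: P_def bordered_circulant_sym)
  ultimately show "blow_up n k l P \<in> DKL k l m n"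
    using assms(1,2) by (intro blow_up_DKL) auto
  have "c div r < q + 1"
    using \<open>c + n = r*(q+2)\<close> \<open>0 < r\<close> \<open>r < n\<close> by (simp add: div_less_iff_less_mult algebra_simps)
  then have "tdet (n*k) (n*l) (blow_up n k l P)
      \<le> k * (\<Sum>a<n. if a < s then q else q + 1) + l * (\<Sum>b<n. if b < s then 0 else 1)"
    using assms(1,2) bordered_circulant_le unfolding P_def by (intro tdet_blow_up_le) auto
  also have "\<dots> = n*k*q + r*(k+l)"
    using \<open>s + r = n\<close> sum_lessThan_add[of "\<lambda>a. if a < s then q else q + 1" s r]
      sum_lessThan_add[of "\<lambda>b. if b < s then 0 else 1::nat" s r] by (auto simp: algebra_simps)
  finally show "tdet (n*k) (n*l) (blow_up n k l P) \<le> n*k*(m div n) + (m mod n)*(k+l)"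
    unfolding q_def r_def .
qed

lemma LKL_eqI:
  assumes "k \<le> l"
    and lower: "\<And>A. A \<in> DKL k l m n \<Longrightarrow> T \<le> tdet (n*k) (n*l) A"
    and upper: "\<exists>A\<in>DKL k l m n. tdet (n*k) (n*l) A \<le> T"
  shows "LKL k l m n = T"
proof -
  have "tdet (n*k) (n*l) A \<le> (\<Sum>i<n*k. m*l) + (\<Sum>j<n*l. 0)" if A: "A \<in> DKL k l m n" for A
  proof (rule tdet_le_cover)
    show "A i j \<le> m*l + 0" if "i < n*k" "j < n*l" for i j
      using member_le_sum[of j "{..<n*l}" "A i"] A that unfolding DKL_def by auto
  qed (use assms(1) in simp)
  then have "tdet (n*k) (n*l) ` DKL k l m n \<subseteq> {..n*k*(m*l)}" by auto
  then have fin: "finite (tdet (n*k) (n*l) ` DKL k l m n)" by (rule finite_subset) simp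
  obtain A0 where A0: "A0 \<in> DKL k l m n" "tdet (n*k) (n*l) A0 \<le> T" using upper by blast
  have "Min (tdet (n*k) (n*l) ` DKL k l m n) \<le> T"
    using Min_le[OF fin imageI[OF A0(1)]] A0(2) by linarith
  moreover have "T \<le> Min (tdet (n*k) (n*l) ` DKL k l m n)"
    using fin A0(1) lower by (intro Min.boundedI) auto
  ultimately show ?thesis unfolding LKL_def by simp
qed

lemma DKL_tdet_ge:
  assumes "0 < k" "k \<le> l" "0 < n" "A \<in> DKL k l m n"
  shows "min (n*k*(m div n + 1)) (n*k*(m div n) + (m mod n)*(k+l)) \<le> tdet (n*k) (n*l) A"
proof -
  obtain u v where cover: "weighted_cover (n*l) A u v"
    and "sum u {..<n*l} + sum v {..<n*l} \<le> int (tdet (n*k) (n*l) A)"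
    using DKL_weighted_cover_le_tdet[OF assms(2,4)] by blast
  moreover have "int (min (n*k*(m div n + 1)) (n*k*(m div n) + (m mod n)*(k+l))) \<le> sum u {..<n*l} + sum v {..<n*l}"
    using assms(1,3) by (intro DKL_weighted_cover_cost_ge[OF assms(2) _ assms(4) cover]) simp
  ultimately show ?thesis by linarith
qed

lemma LKL_eq_small_remainder:
  assumes "0 < k" "k \<le> l" "0 < n"
    and "n \<le> (m mod n) * (m div n + 2)" "(m mod n) * (k + l) \<le> n*k"
  shows "LKL k l m n = n*k*(m div n) + (m mod n)*(k + l)"
proof (rule LKL_eqI[OF assms(2)])
  show "n*k*(m div n) + (m mod n)*(k + l) \<le> tdet (n*k) (n*l) A" if "A \<in> DKL k l m n" for A
    using DKL_tdet_ge[OF assms(1-3) that] assms(5) by (simp add: algebra_simps)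
  show "\<exists>A\<in>DKL k l m n. tdet (n*k) (n*l) A \<le> n*k*(m div n) + (m mod n)*(k + l)"
    using DKL_tdet_le_bordered[OF assms(1-4)] .
qed

lemma LKL_eq_large_remainder:
  assumes "0 < k" "k \<le> l" "0 < n" and "n*k \<le> (m mod n) * (k + l)"
  shows "LKL k l m n = n*k*(m div n + 1)"
proof (rule LKL_eqI[OF assms(2)])
  show "n*k*(m div n + 1) \<le> tdet (n*k) (n*l) A" if "A \<in> DKL k l m n" for A
    using DKL_tdet_ge[OF assms(1-3) that] assms(4) by (simp add: algebra_simps)
  show "\<exists>A\<in>DKL k l m n. tdet (n*k) (n*l) A \<le> n*k*(m div n + 1)"
    using DKL_tdet_le_uniform[OF assms(1-3)] .
qed

lemma real_div_le_real_iff: "0 < b \<Longrightarrow> real a / real b \<le> real c \<longleftrightarrow> a \<le> c * b"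
  by (simp add: divide_le_eq flip: of_nat_mult)

lemma real_le_real_div_iff: "0 < b \<Longrightarrow> real c \<le> real a / real b \<longleftrightarrow> c * b \<le> a"
  by (simp add: le_divide_eq flip: of_nat_mult)

theorem corollary4p3:
  fixes k l m n :: nat
  assumes "0 < k" and "k \<le> l" and "gcd k l = 1" and "1 \<le> n"
  defines "q \<equiv> m div n" and "r \<equiv> m mod n"
  shows "(real n / real (q + 2) \<le> real r \<and> real r \<le> real (n*k) / real (k + l)
            \<longrightarrow> LKL k l m n = n*k*q + r*(k + l))
       \<and> (real r \<ge> real (n*k) / real (k + l) \<longrightarrow> LKL k l m n = n*k*(q + 1))"
proof -
  have "0 < n" "0 < k + l" using assms(1,4) by auto
  show ?thesis
  proof (intro conjI impI)
    assume "real n / real (q + 2) \<le> real r \<and> real r \<le> real (n*k) / real (k + l)"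
    then have "n \<le> r * (q + 2)" "r * (k + l) \<le> n*k"
      using \<open>0 < k + l\<close> by (simp_all only: real_div_le_real_iff real_le_real_div_iff zero_less_Suc add_2_eq_Suc')
    then show "LKL k l m n = n*k*q + r*(k + l)"
      unfolding q_def r_def using LKL_eq_small_remainder[OF assms(1,2) \<open>0 < n\<close>] by blast
  next
    assume "real (n*k) / real (k + l) \<le> real r"
    then have "n*k \<le> r * (k + l)" using \<open>0 < k + l\<close> by (simp only: real_div_le_real_iff)
    then show "LKL k l m n = n*k*(q + 1)"
      unfolding q_def r_def using LKL_eq_large_remainder[OF assms(1,2) \<open>0 < n\<close>] by blast
  qed
qed

end
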